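(* Let $A$ be a two-dimensional evolution algebra over a field $\mathbb{K}$ with $A^2=A$. Then: (i) if $\mathfrak{S}(A)=\mathfrak{D}_1$, there is a natural basis with structure matrix $\begin{pmatrix}1&0\\0&1\end{pmatrix}$ (the algebra $A_1$); (ii) if $\mathfrak{S}(A)=\mathfrak{D}_2$, there is a natural basis with structure matrix $\begin{pmatrix}0&\alpha\\1&0\end{pmatrix}$ for some $\alpha\in\mathbb{K}^\times$ (the algebra $A_{2,\alpha}$); (iii) if $\mathfrak{S}(A)=\mathfrak{D}_3$, there is a natural basis with structure matrix $\begin{pmatrix}1&\alpha\\0&1\end{pmatrix}$ for some $\alpha\in\mathbb{K}^\times$ (the algebra $A_{3,\alpha}$); (iv) if $\mathfrak{S}(A)=\mathfrak{D}_4$, there is a natural basis with structure matrix $\begin{pmatrix}0&1\\\alpha&1\end{pmatrix}$ for some $\alpha\in\mathbb{K}^\times$ (the algebra $A_{4,\alpha}$); (v) if $\mathfrak{S}(A)=\mathfrak{D}_5$, there is a natural basis with structure matrix $\begin{pmatrix}1&\alpha\\\beta&1\end{pmatrix}$ for some $\alpha,\beta\in\mathbb{K}^\times$ with $\alpha\beta\neq1$ (the algebra $A_{5,\alpha,\beta}$).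
   Context: An evolution algebra over $\mathbb{K}$ is a $\mathbb{K}$-algebra with a basis $\{e_i\}$ (natural basis) such that $e_ie_j=0$ for $i\neq j$. For a natural basis $B=\{e_1,e_2\}$ the structure matrix is $M_B=(\omega_{ij})$ where $e_j^2=\omega_{1j}e_1+\omega_{2j}e_2$. The pseudo-square relative to $B$ is $E_B\subseteq\{L,T,R,D\}$ with $L\in E_B$ iff $\omega_{11}\neq0$, $T\in E_B$ iff $\omega_{12}\neq0$, $R\in E_B$ iff $\omega_{22}\neq0$, $D\in E_B$ iff $\omega_{21}\neq0$; the square $\mathfrak{S}(A)$ is the set of all $E_B$ over all natural bases $B$. $\mathfrak{D}_1=\{\{L,R\}\}$, $\mathfrak{D}_2=\{\{T,D\}\}$, $\mathfrak{D}_3=\{\{L,T,R\},\{L,R,D\}\}$, $\mathfrak{D}_4=\{\{L,T,D\},\{T,R,D\}\}$, $\mathfrak{D}_5=\{\{L,T,R,D\}\}$. *)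

theory Defs
  imports Main
begin

text \<open>A two-dimensional algebra over a field 'k is modelled (up to isomorphism)
  as the vector space 'k x 'k equipped with a bilinear product m.\<close>

type_synonym 'k vec2 = "'k \<times> 'k"

definition vadd :: "'k::field vec2 \<Rightarrow> 'k vec2 \<Rightarrow> 'k vec2" where
  "vadd u v = (fst u + fst v, snd u + snd v)"

definition vsmul :: "'k::field \<Rightarrow> 'k vec2 \<Rightarrow> 'k vec2" where
  "vsmul c u = (c * fst u, c * snd u)"

definition vzero :: "'k::field vec2" where
  "vzero = (0, 0)"

definition bilinear2 :: "('k::field vec2 \<Rightarrow> 'k vec2 \<Rightarrow> 'k vec2) \<Rightarrow> bool" where
  "bilinear2 m \<longleftrightarrow>
     (\<forall>u v w. m (vadd u v) w = vadd (m u w) (m v w)) \<and>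
     (\<forall>u v w. m u (vadd v w) = vadd (m u v) (m u w)) \<and>
     (\<forall>c u v. m (vsmul c u) v = vsmul c (m u v)) \<and>
     (\<forall>c u v. m u (vsmul c v) = vsmul c (m u v))"

definition lin_indep2 :: "'k::field vec2 \<Rightarrow> 'k vec2 \<Rightarrow> bool" where
  "lin_indep2 e1 e2 \<longleftrightarrow>
     (\<forall>a b. vadd (vsmul a e1) (vsmul b e2) = vzero \<longrightarrow> a = 0 \<and> b = 0)"

definition natural_basis :: "('k::field vec2 \<Rightarrow> 'k vec2 \<Rightarrow> 'k vec2) \<Rightarrow> 'k vec2 \<Rightarrow> 'k vec2 \<Rightarrow> bool" where
  "natural_basis m e1 e2 \<longleftrightarrow> lin_indep2 e1 e2 \<and> m e1 e2 = vzero \<and> m e2 e1 = vzero"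

definition evolution_algebra :: "('k::field vec2 \<Rightarrow> 'k vec2 \<Rightarrow> 'k vec2) \<Rightarrow> bool" where
  "evolution_algebra m \<longleftrightarrow> bilinear2 m \<and> (\<exists>e1 e2. natural_basis m e1 e2)"

text \<open>A^2 = A: every element is a (finite) linear combination of products.\<close>
definition square_full :: "('k::field vec2 \<Rightarrow> 'k vec2 \<Rightarrow> 'k vec2) \<Rightarrow> bool" where
  "square_full m \<longleftrightarrow>
     (\<forall>w. \<exists>ps :: ('k \<times> 'k vec2 \<times> 'k vec2) list.
        w = foldr (\<lambda>(c, u, v) acc. vadd (vsmul c (m u v)) acc) ps vzero)"

definition coords :: "'k::field vec2 \<Rightarrow> 'k vec2 \<Rightarrow> 'k vec2 \<Rightarrow> 'k \<times> 'k" where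
  "coords e1 e2 v = (THE ab. v = vadd (vsmul (fst ab) e1) (vsmul (snd ab) e2))"

text \<open>Structure matrix ((w11, w12), (w21, w22)) where e_j^2 = w1j e1 + w2j e2.\<close>
definition struct_matrix ::
  "('k::field vec2 \<Rightarrow> 'k vec2 \<Rightarrow> 'k vec2) \<Rightarrow> 'k vec2 \<Rightarrow> 'k vec2 \<Rightarrow> ('k \<times> 'k) \<times> ('k \<times> 'k)" where
  "struct_matrix m e1 e2 =
     (let c1 = coords e1 e2 (m e1 e1); c2 = coords e1 e2 (m e2 e2)
      in ((fst c1, fst c2), (snd c1, snd c2)))"

datatype pos = L | T | R | D

definition pseudo_square :: "('k::field vec2 \<Rightarrow> 'k vec2 \<Rightarrow> 'k vec2) \<Rightarrow> 'k vec2 \<Rightarrow> 'k vec2 \<Rightarrow> pos set" where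
  "pseudo_square m e1 e2 =
     (let M = struct_matrix m e1 e2 in
       {x. (x = L \<and> fst (fst M) \<noteq> 0) \<or> (x = T \<and> snd (fst M) \<noteq> 0) \<or>
           (x = R \<and> snd (snd M) \<noteq> 0) \<or> (x = D \<and> fst (snd M) \<noteq> 0)})"

definition square_of :: "('k::field vec2 \<Rightarrow> 'k vec2 \<Rightarrow> 'k vec2) \<Rightarrow> pos set set" where
  "square_of m = {pseudo_square m e1 e2 | e1 e2. natural_basis m e1 e2}"

definition "D1 = {{L, R}}"
definition "D2 = {{T, D}}"
definition "D3 = {{L, T, R}, {L, R, D}}"
definition "D4 = {{L, T, D}, {T, R, D}}"
definition "D5 = {{L, T, R, D}}"

end

theory Submission
  imports Defs
begin

text \<open>Rescaling a natural basis \<open>e\<^sub>1, e\<^sub>2\<close> to \<open>l\<^sub>1 e\<^sub>1, l\<^sub>2 e\<^sub>2\<close> turns the structure matrix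
  \<open>((a, b), (c, d))\<close> into \<open>((l\<^sub>1 a, l\<^sub>2\<^sup>2 b / l\<^sub>1), (l\<^sub>1\<^sup>2 c / l\<^sub>2, l\<^sub>2 d))\<close>: the zero pattern is kept and
  two suitably placed nonzero entries can be made equal to 1. Since \<open>\<frakD>\<^sub>3\<close> and \<open>\<frakD>\<^sub>4\<close> contain
  both of their patterns, each square prescribes a natural basis with a pattern of our choice.
  In the case \<open>\<frakD>\<^sub>5\<close>, \<open>A\<^sup>2 = A\<close> means that \<open>e\<^sub>1\<^sup>2, e\<^sub>2\<^sup>2\<close> span \<open>A\<close>, so \<open>ad \<noteq> bc\<close>, which after
  normalisation is the condition \<open>\<alpha>\<beta> \<noteq> 1\<close>.\<close>

lemma lin_indep2_iff_det:
  fixes e1 e2 :: "'k::field vec2"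
  shows "lin_indep2 e1 e2 \<longleftrightarrow> fst e1 * snd e2 \<noteq> snd e1 * fst e2"
proof -
  obtain p q r s where e: "e1 = (p, q)" "e2 = (r, s)" by fastforce
  have combination_zero:
    "vadd (vsmul x e1) (vsmul y e2) = vzero \<longleftrightarrow> x * p + y * r = 0 \<and> x * q + y * s = 0" for x y
    by (simp add: e vadd_def vsmul_def vzero_def)
  show ?thesis
  proof
    assume "lin_indep2 e1 e2"
    then have indep: "x = 0 \<and> y = 0" if "x * p + y * r = 0" "x * q + y * s = 0" for x y
      using that unfolding lin_indep2_def combination_zero by blast
    show "fst e1 * snd e2 \<noteq> snd e1 * fst e2"
    proof
      assume "fst e1 * snd e2 = snd e1 * fst e2"
      then have det: "p * s = q * r" by (simp add: e)
      then have "s = 0 \<and> q = 0" using indep[of s "- q"] by (simp add: mult.commute)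
      moreover have "r = 0 \<and> p = 0" using det indep[of r "- p"] by (simp add: mult.commute)
      ultimately show False using indep[of 1 0] by simp
    qed
  next
    assume "fst e1 * snd e2 \<noteq> snd e1 * fst e2"
    then have det: "p * s - q * r \<noteq> 0" by (simp add: e)
    show "lin_indep2 e1 e2"
      unfolding lin_indep2_def combination_zero
    proof (intro allI impI)
      fix x y assume eqs: "x * p + y * r = 0 \<and> x * q + y * s = 0"
      have "x * (p * s - q * r) = s * (x * p + y * r) - r * (x * q + y * s)"
           "y * (p * s - q * r) = p * (x * q + y * s) - q * (x * p + y * r)"
        by (simp_all add: algebra_simps)
      then show "x = 0 \<and> y = 0" using eqs det by simp
    qed
  qed
qed

lemma lin_indep2_spans:
  fixes e1 e2 :: "'k::field vec2"
  assumes "lin_indep2 e1 e2"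
  shows "\<exists>x y. v = vadd (vsmul x e1) (vsmul y e2)"
proof -
  obtain p q r s where e: "e1 = (p, q)" "e2 = (r, s)" by fastforce
  obtain v1 v2 where v: "v = (v1, v2)" by fastforce
  define \<Delta> where "\<Delta> = p * s - q * r"
  have "\<Delta> \<noteq> 0" using assms by (simp add: lin_indep2_iff_det e \<Delta>_def)
  moreover have "(v1 * s - v2 * r) * p + (p * v2 - q * v1) * r = v1 * \<Delta>"
                "(v1 * s - v2 * r) * q + (p * v2 - q * v1) * s = v2 * \<Delta>"
    by (simp_all add: \<Delta>_def algebra_simps)
  ultimately have "v1 = (v1 * s - v2 * r) / \<Delta> * p + (p * v2 - q * v1) / \<Delta> * r"
                  "v2 = (v1 * s - v2 * r) / \<Delta> * q + (p * v2 - q * v1) / \<Delta> * s"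
    by (simp_all add: field_simps)
  then show ?thesis
    by (intro exI[of _ "(v1 * s - v2 * r) / \<Delta>"] exI[of _ "(p * v2 - q * v1) / \<Delta>"])
       (simp add: e v vadd_def vsmul_def mult.commute)
qed

lemma lin_indep2_combination_eq_iff:
  fixes e1 e2 :: "'k::field vec2"
  assumes "lin_indep2 e1 e2"
  shows "vadd (vsmul x e1) (vsmul y e2) = vadd (vsmul x' e1) (vsmul y' e2) \<longleftrightarrow> x = x' \<and> y = y'"
proof
  assume "vadd (vsmul x e1) (vsmul y e2) = vadd (vsmul x' e1) (vsmul y' e2)"
  then have "vadd (vsmul (x - x') e1) (vsmul (y - y') e2) = vzero"
    by (auto simp: vadd_def vsmul_def vzero_def algebra_simps prod_eq_iff)
  then show "x = x' \<and> y = y'" using assms unfolding lin_indep2_def by fastforce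
qed simp

lemma coords_combination:
  fixes e1 e2 :: "'k::field vec2"
  assumes "lin_indep2 e1 e2"
  shows "coords e1 e2 (vadd (vsmul x e1) (vsmul y e2)) = (x, y)"
  unfolding coords_def
  by (rule the_equality) (auto simp: lin_indep2_combination_eq_iff[OF assms])

lemma struct_matrix_eq_iff:
  fixes e1 e2 :: "'k::field vec2"
  assumes "lin_indep2 e1 e2"
  shows "struct_matrix m e1 e2 = ((a, b), (c, d)) \<longleftrightarrow>
    m e1 e1 = vadd (vsmul a e1) (vsmul c e2) \<and> m e2 e2 = vadd (vsmul b e1) (vsmul d e2)"
proof -
  obtain x y x' y' where
    "m e1 e1 = vadd (vsmul x e1) (vsmul y e2)" "m e2 e2 = vadd (vsmul x' e1) (vsmul y' e2)"
    using lin_indep2_spans[OF assms] by metis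
  then show ?thesis
    by (auto simp: struct_matrix_def coords_combination[OF assms]
                   lin_indep2_combination_eq_iff[OF assms])
qed

lemma square_of_memberE:
  assumes "P \<in> square_of m"
  obtains e1 e2 a b c d where "natural_basis m e1 e2" "struct_matrix m e1 e2 = ((a, b), (c, d))"
    "L \<in> P \<longleftrightarrow> a \<noteq> 0" "T \<in> P \<longleftrightarrow> b \<noteq> 0" "R \<in> P \<longleftrightarrow> d \<noteq> 0" "D \<in> P \<longleftrightarrow> c \<noteq> 0"
proof -
  obtain e1 e2 where "natural_basis m e1 e2" "P = pseudo_square m e1 e2"
    using assms unfolding square_of_def by blast
  moreover obtain a b c d where "struct_matrix m e1 e2 = ((a, b), (c, d))"
    by (metis prod.collapse)
  ultimately show thesis
    using that by (simp add: pseudo_square_def)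
qed

lemma natural_basis_mult:
  fixes m :: "'k::field vec2 \<Rightarrow> 'k vec2 \<Rightarrow> 'k vec2"
  assumes "bilinear2 m" "natural_basis m e1 e2"
  shows "m (vadd (vsmul x1 e1) (vsmul x2 e2)) (vadd (vsmul y1 e1) (vsmul y2 e2))
     = vadd (vsmul (x1 * y1) (m e1 e1)) (vsmul (x2 * y2) (m e2 e2))"
proof -
  have bilinear: "m (vadd u v) w = vadd (m u w) (m v w)" "m u (vadd v w) = vadd (m u v) (m u w)"
       "m (vsmul k u) v = vsmul k (m u v)" "m u (vsmul k v) = vsmul k (m u v)" for k u v w
    using assms(1) unfolding bilinear2_def by blast+
  have "m e1 e2 = vzero" "m e2 e1 = vzero"
    using assms(2) by (simp_all add: natural_basis_def)
  then show ?thesis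
    unfolding bilinear by (simp add: vadd_def vsmul_def vzero_def algebra_simps)
qed

lemma sum_of_products_in_span_of_squares:
  fixes m :: "'k::field vec2 \<Rightarrow> 'k vec2 \<Rightarrow> 'k vec2"
  assumes "bilinear2 m" "natural_basis m e1 e2"
  shows "\<exists>x y. foldr (\<lambda>(c, u, v) acc. vadd (vsmul c (m u v)) acc) ps vzero
     = vadd (vsmul x (m e1 e1)) (vsmul y (m e2 e2))"
proof (induction ps)
  case Nil
  show ?case by (intro exI[of _ 0]) (simp add: vadd_def vsmul_def vzero_def)
next
  case (Cons p ps)
  obtain c u v where p: "p = (c, u, v)" by (cases p) auto
  have indep: "lin_indep2 e1 e2" using assms(2) by (simp add: natural_basis_def)
  obtain x1 x2 y1 y2 where
    u: "u = vadd (vsmul x1 e1) (vsmul x2 e2)" and v: "v = vadd (vsmul y1 e1) (vsmul y2 e2)"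
    using lin_indep2_spans[OF indep] by metis
  have "m u v = vadd (vsmul (x1 * y1) (m e1 e1)) (vsmul (x2 * y2) (m e2 e2))"
    by (simp add: u v natural_basis_mult[OF assms])
  moreover obtain x y where "foldr (\<lambda>(c, u, v) acc. vadd (vsmul c (m u v)) acc) ps vzero
     = vadd (vsmul x (m e1 e1)) (vsmul y (m e2 e2))"
    using Cons.IH by blast
  ultimately show ?case
    by (intro exI[of _ "c * x1 * y1 + x"] exI[of _ "c * x2 * y2 + y"])
       (simp add: p vadd_def vsmul_def algebra_simps)
qed

lemma struct_matrix_det_nonzero:
  fixes m :: "'k::field vec2 \<Rightarrow> 'k vec2 \<Rightarrow> 'k vec2"
  assumes "bilinear2 m" "natural_basis m e1 e2" "square_full m"
    and sm: "struct_matrix m e1 e2 = ((a, b), (c, d))"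
  shows "a * d \<noteq> b * c"
proof
  assume singular: "a * d = b * c"
  have indep: "lin_indep2 e1 e2" using assms(2) by (simp add: natural_basis_def)
  have squares: "m e1 e1 = vadd (vsmul a e1) (vsmul c e2)" "m e2 e2 = vadd (vsmul b e1) (vsmul d e2)"
    using sm struct_matrix_eq_iff[OF indep] by auto
  have image: "\<exists>x y. vadd (vsmul s e1) (vsmul t e2)
                    = vadd (vsmul (x * a + y * b) e1) (vsmul (x * c + y * d) e2)" for s t
  proof -
    obtain x y where "vadd (vsmul s e1) (vsmul t e2) = vadd (vsmul x (m e1 e1)) (vsmul y (m e2 e2))"
      using assms(3) sum_of_products_in_span_of_squares[OF assms(1,2)]
      unfolding square_full_def by metis
    then show ?thesis
      by (intro exI[of _ x] exI[of _ y]) (simp add: squares vadd_def vsmul_def algebra_simps)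
  qed
  \<comment> \<open>\<open>((x, x'), (y, y'))\<close> is a right inverse of the structure matrix\<close>
  obtain x y x' y' where "x * a + y * b = 1" "x * c + y * d = 0" "x' * a + y' * b = 0" "x' * c + y' * d = 1"
    using image[of 1 0] image[of 0 1] lin_indep2_combination_eq_iff[OF indep] by metis
  moreover have "(a * d - b * c) * (x * y' - x' * y)
      = (x * a + y * b) * (x' * c + y' * d) - (x * c + y * d) * (x' * a + y' * b)"
    by (simp add: algebra_simps)
  ultimately show False using singular by simp
qed

lemma natural_basis_rescale:
  fixes m :: "'k::field vec2 \<Rightarrow> 'k vec2 \<Rightarrow> 'k vec2"
  assumes "bilinear2 m" "natural_basis m e1 e2" "l1 \<noteq> 0" "l2 \<noteq> 0"
    and sm: "struct_matrix m e1 e2 = ((a, b), (c, d))"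
  shows "natural_basis m (vsmul l1 e1) (vsmul l2 e2)"
    and "struct_matrix m (vsmul l1 e1) (vsmul l2 e2)
           = ((l1 * a, l2\<^sup>2 * b / l1), (l1\<^sup>2 * c / l2, l2 * d))"
proof -
  have homogeneous: "m (vsmul k u) v = vsmul k (m u v)" "m u (vsmul k v) = vsmul k (m u v)" for k u v
    using assms(1) unfolding bilinear2_def by blast+
  have indep: "lin_indep2 e1 e2" and orth: "m e1 e2 = vzero" "m e2 e1 = vzero"
    using assms(2) by (simp_all add: natural_basis_def)
  have indep': "lin_indep2 (vsmul l1 e1) (vsmul l2 e2)"
    using indep assms(3,4) by (simp add: lin_indep2_iff_det vsmul_def)
  then show "natural_basis m (vsmul l1 e1) (vsmul l2 e2)"
    unfolding natural_basis_def homogeneous orth by (simp add: vsmul_def vzero_def)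
  have "m e1 e1 = vadd (vsmul a e1) (vsmul c e2)" "m e2 e2 = vadd (vsmul b e1) (vsmul d e2)"
    using sm struct_matrix_eq_iff[OF indep] by auto
  with assms(3,4) show "struct_matrix m (vsmul l1 e1) (vsmul l2 e2)
           = ((l1 * a, l2\<^sup>2 * b / l1), (l1\<^sup>2 * c / l2, l2 * d))"
    unfolding struct_matrix_eq_iff[OF indep'] homogeneous
    by (simp add: vadd_def vsmul_def field_simps power2_eq_square)
qed

lemma natural_basis_unit_diagonal:
  fixes m :: "'k::field vec2 \<Rightarrow> 'k vec2 \<Rightarrow> 'k vec2"
  assumes "bilinear2 m" "natural_basis m e1 e2" "struct_matrix m e1 e2 = ((a, b), (c, d))"
    and "a \<noteq> 0" "d \<noteq> 0"
  obtains e1' e2' where "natural_basis m e1' e2'"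
    "struct_matrix m e1' e2' = ((1, a * b / d\<^sup>2), (c * d / a\<^sup>2, 1))"
  using natural_basis_rescale[OF assms(1,2) _ _ assms(3), of "1 / a" "1 / d"] assms(4,5) that
  by (simp add: power2_eq_square)

lemma natural_basis_unit_lower_left:
  fixes m :: "'k::field vec2 \<Rightarrow> 'k vec2 \<Rightarrow> 'k vec2"
  assumes "bilinear2 m" "natural_basis m e1 e2" "struct_matrix m e1 e2 = ((a, b), (c, d))"
    and "c \<noteq> 0"
  obtains e1' e2' where "natural_basis m e1' e2'"
    "struct_matrix m e1' e2' = ((a, c\<^sup>2 * b), (1, c * d))"
  using natural_basis_rescale[OF assms(1,2) _ _ assms(3), of 1 c] assms(4) that
  by simp

lemma natural_basis_unit_right_column:
  fixes m :: "'k::field vec2 \<Rightarrow> 'k vec2 \<Rightarrow> 'k vec2"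
  assumes "bilinear2 m" "natural_basis m e1 e2" "struct_matrix m e1 e2 = ((a, b), (c, d))"
    and "b \<noteq> 0" "d \<noteq> 0"
  obtains e1' e2' where "natural_basis m e1' e2'"
    "struct_matrix m e1' e2' = ((a * b / d\<^sup>2, 1), (b\<^sup>2 * c / d ^ 3, 1))"
  using natural_basis_rescale[OF assms(1,2) _ _ assms(3), of "b / d\<^sup>2" "1 / d"] assms(4,5) that
  by (simp add: field_simps power2_eq_square power3_eq_cube)

lemma normal_form_D1:
  fixes m :: "'k::field vec2 \<Rightarrow> 'k vec2 \<Rightarrow> 'k vec2"
  assumes "bilinear2 m" "square_of m = D1"
  shows "\<exists>e1 e2. natural_basis m e1 e2 \<and> struct_matrix m e1 e2 = ((1, 0), (0, 1))"
proof -
  have "{L, R} \<in> square_of m" using assms(2) by (simp add: D1_def)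
  then obtain e1 e2 a d where basis: "natural_basis m e1 e2" "struct_matrix m e1 e2 = ((a, 0), (0, d))"
      and nonzero: "a \<noteq> 0" "d \<noteq> 0"
    by (rule square_of_memberE) auto
  obtain e1' e2' where "natural_basis m e1' e2'" "struct_matrix m e1' e2' = ((1, 0), (0, 1))"
    by (rule natural_basis_unit_diagonal[OF assms(1) basis nonzero]) auto
  then show ?thesis by blast
qed

lemma normal_form_D2:
  fixes m :: "'k::field vec2 \<Rightarrow> 'k vec2 \<Rightarrow> 'k vec2"
  assumes "bilinear2 m" "square_of m = D2"
  shows "\<exists>e1 e2 \<alpha>. \<alpha> \<noteq> 0 \<and> natural_basis m e1 e2 \<and> struct_matrix m e1 e2 = ((0, \<alpha>), (1, 0))"
proof -
  have "{T, D} \<in> square_of m" using assms(2) by (simp add: D2_def)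
  then obtain e1 e2 b c where basis: "natural_basis m e1 e2" "struct_matrix m e1 e2 = ((0, b), (c, 0))"
      and nonzero: "b \<noteq> 0" "c \<noteq> 0"
    by (rule square_of_memberE) auto
  obtain e1' e2' where "natural_basis m e1' e2'" "struct_matrix m e1' e2' = ((0, c\<^sup>2 * b), (1, 0))"
    by (rule natural_basis_unit_lower_left[OF assms(1) basis nonzero(2)]) auto
  moreover have "c\<^sup>2 * b \<noteq> 0" using nonzero by simp
  ultimately show ?thesis by blast
qed

lemma normal_form_D3:
  fixes m :: "'k::field vec2 \<Rightarrow> 'k vec2 \<Rightarrow> 'k vec2"
  assumes "bilinear2 m" "square_of m = D3"
  shows "\<exists>e1 e2 \<alpha>. \<alpha> \<noteq> 0 \<and> natural_basis m e1 e2 \<and> struct_matrix m e1 e2 = ((1, \<alpha>), (0, 1))"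
proof -
  have "{L, T, R} \<in> square_of m" using assms(2) by (simp add: D3_def)
  then obtain e1 e2 a b d where basis: "natural_basis m e1 e2" "struct_matrix m e1 e2 = ((a, b), (0, d))"
      and nonzero: "a \<noteq> 0" "b \<noteq> 0" "d \<noteq> 0"
    by (rule square_of_memberE) auto
  obtain e1' e2' where "natural_basis m e1' e2'" "struct_matrix m e1' e2' = ((1, a * b / d\<^sup>2), (0, 1))"
    by (rule natural_basis_unit_diagonal[OF assms(1) basis nonzero(1,3)]) auto
  moreover have "a * b / d\<^sup>2 \<noteq> 0" using nonzero by simp
  ultimately show ?thesis by blast
qed

lemma normal_form_D4:
  fixes m :: "'k::field vec2 \<Rightarrow> 'k vec2 \<Rightarrow> 'k vec2"
  assumes "bilinear2 m" "square_of m = D4"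
  shows "\<exists>e1 e2 \<alpha>. \<alpha> \<noteq> 0 \<and> natural_basis m e1 e2 \<and> struct_matrix m e1 e2 = ((0, 1), (\<alpha>, 1))"
proof -
  have "{T, R, D} \<in> square_of m" using assms(2) by (simp add: D4_def)
  then obtain e1 e2 b c d where basis: "natural_basis m e1 e2" "struct_matrix m e1 e2 = ((0, b), (c, d))"
      and nonzero: "b \<noteq> 0" "c \<noteq> 0" "d \<noteq> 0"
    by (rule square_of_memberE) auto
  obtain e1' e2' where "natural_basis m e1' e2'" "struct_matrix m e1' e2' = ((0, 1), (b\<^sup>2 * c / d ^ 3, 1))"
    by (rule natural_basis_unit_right_column[OF assms(1) basis nonzero(1,3)]) auto
  moreover have "b\<^sup>2 * c / d ^ 3 \<noteq> 0" using nonzero by simp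
  ultimately show ?thesis by blast
qed

lemma normal_form_D5:
  fixes m :: "'k::field vec2 \<Rightarrow> 'k vec2 \<Rightarrow> 'k vec2"
  assumes "bilinear2 m" "square_full m" "square_of m = D5"
  shows "\<exists>e1 e2 \<alpha> \<beta>. \<alpha> \<noteq> 0 \<and> \<beta> \<noteq> 0 \<and> \<alpha> * \<beta> \<noteq> 1 \<and> natural_basis m e1 e2 \<and>
           struct_matrix m e1 e2 = ((1, \<alpha>), (\<beta>, 1))"
proof -
  have "{L, T, R, D} \<in> square_of m" using assms(3) by (simp add: D5_def)
  then obtain e1 e2 a b c d where basis: "natural_basis m e1 e2" "struct_matrix m e1 e2 = ((a, b), (c, d))"
      and nonzero: "a \<noteq> 0" "b \<noteq> 0" "c \<noteq> 0" "d \<noteq> 0"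
    by (rule square_of_memberE) auto
  obtain e1' e2' where "natural_basis m e1' e2'"
      "struct_matrix m e1' e2' = ((1, a * b / d\<^sup>2), (c * d / a\<^sup>2, 1))"
    by (rule natural_basis_unit_diagonal[OF assms(1) basis nonzero(1,4)])
  moreover have "a * d \<noteq> b * c"
    using struct_matrix_det_nonzero[OF assms(1) basis(1) assms(2) basis(2)] .
  then have "a * b / d\<^sup>2 * (c * d / a\<^sup>2) \<noteq> 1"
    using nonzero by (simp add: field_simps power2_eq_square)
  moreover have "a * b / d\<^sup>2 \<noteq> 0" "c * d / a\<^sup>2 \<noteq> 0" using nonzero by simp_all
  ultimately show ?thesis by blast
qed

theorem lemma3p1:
  fixes m :: "'k::field vec2 \<Rightarrow> 'k vec2 \<Rightarrow> 'k vec2"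
  assumes "evolution_algebra m"
    and "square_full m"
  shows "(square_of m = D1 \<longrightarrow>
            (\<exists>e1 e2. natural_basis m e1 e2 \<and> struct_matrix m e1 e2 = ((1, 0), (0, 1))))
       \<and> (square_of m = D2 \<longrightarrow>
            (\<exists>e1 e2 \<alpha>. \<alpha> \<noteq> 0 \<and> natural_basis m e1 e2 \<and>
               struct_matrix m e1 e2 = ((0, \<alpha>), (1, 0))))
       \<and> (square_of m = D3 \<longrightarrow>
            (\<exists>e1 e2 \<alpha>. \<alpha> \<noteq> 0 \<and> natural_basis m e1 e2 \<and>
               struct_matrix m e1 e2 = ((1, \<alpha>), (0, 1))))
       \<and> (square_of m = D4 \<longrightarrow>
            (\<exists>e1 e2 \<alpha>. \<alpha> \<noteq> 0 \<and> natural_basis m e1 e2 \<and>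
               struct_matrix m e1 e2 = ((0, 1), (\<alpha>, 1))))
       \<and> (square_of m = D5 \<longrightarrow>
            (\<exists>e1 e2 \<alpha> \<beta>. \<alpha> \<noteq> 0 \<and> \<beta> \<noteq> 0 \<and> \<alpha> * \<beta> \<noteq> 1 \<and> natural_basis m e1 e2 \<and>
               struct_matrix m e1 e2 = ((1, \<alpha>), (\<beta>, 1))))"
proof -
  have "bilinear2 m" using assms(1) by (simp add: evolution_algebra_def)
  then show ?thesis
    by (intro conjI impI normal_form_D1 normal_form_D2 normal_form_D3 normal_form_D4
          normal_form_D5[OF _ assms(2)])
qed

end
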